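(* For every integer $n \geqslant 3$, the line graph $L(W_{n+1})$ of the wheel $W_{n+1}$ is not representable.
   Context: All graphs are finite and simple. For a word $W$ over an alphabet, two distinct letters $x,y$ alternate in $W$ if both occur in $W$ and, after erasing all other letters from $W$, one obtains a word of the form $xyxy\ldots$ or $yxyx\ldots$ (an alternating word of any length). A graph $G=(V,E)$ is representable if there exists a word $W$ over the alphabet $V$ in which every vertex occurs, such that for all distinct $x,y\in V$, the letters $x$ and $y$ alternate in $W$ if and only if $(x,y)\in E$. The wheel $W_m$ is the graph obtained from the cycle $C_m$ on $m$ vertices by adding one new vertex adjacent to all vertices of the cycle. The line graph $L(G)$ of a graph $G$ has the edges of $G$ as vertices, two of them being adjacent in $L(G)$ iff they share an endpoint in $G$. *)

theory Defs
  imports Main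
begin

text \<open>Simple graphs are represented by a vertex set V and an edge set E of
  two-element subsets of V.\<close>

definition alt_word :: "'a \<Rightarrow> 'a \<Rightarrow> nat \<Rightarrow> 'a list" where
  "alt_word x y k = map (\<lambda>i. if even i then x else y) [0..<k]"

definition alternate :: "'a list \<Rightarrow> 'a \<Rightarrow> 'a \<Rightarrow> bool" where
  "alternate W x y \<longleftrightarrow> x \<in> set W \<and> y \<in> set W \<and>
     (\<exists>k. filter (\<lambda>z. z = x \<or> z = y) W = alt_word x y k
         \<or> filter (\<lambda>z. z = x \<or> z = y) W = alt_word y x k)"

definition representable :: "'a set \<Rightarrow> 'a set set \<Rightarrow> bool" where
  "representable V E \<longleftrightarrow> (\<exists>W. set W = V \<and>
     (\<forall>x\<in>V. \<forall>y\<in>V. x \<noteq> y \<longrightarrow> (alternate W x y \<longleftrightarrow> {x, y} \<in> E)))"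

text \<open>Wheel W_m: cycle on vertices 0..m-1 plus hub m adjacent to all cycle vertices.\<close>
definition wheel_verts :: "nat \<Rightarrow> nat set" where
  "wheel_verts m = {0..m}"

definition wheel_edges :: "nat \<Rightarrow> nat set set" where
  "wheel_edges m = {{i, (i + 1) mod m} | i. i < m} \<union> {{i, m} | i. i < m}"

definition line_verts :: "'a set set \<Rightarrow> 'a set set" where
  "line_verts E = E"

definition line_edges :: "'a set set \<Rightarrow> 'a set set set" where
  "line_edges E = {{e, f} | e f. e \<in> E \<and> f \<in> E \<and> e \<noteq> f \<and> e \<inter> f \<noteq> {}}"

end

theory Submission
  imports Defs
begin

text \<open>
  Suppose a word W represents the line graph of the wheel W_m, m \<ge> 4, and order its letters (the
  edges of the wheel) by first occurrence in W. Prefix counts show that the letters along a path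
  which increases in this order and is closed by an edge pairwise alternate, so every such cycle
  spans a clique; in particular an increasing 4-cycle has both chords.

  For the clique of spokes this means: a rim edge lies between its two spokes in the order iff
  every other spoke does. Rotate the wheel so that spoke 0 is the first spoke. One of the two rim
  edges at spoke 0 must lie between its spokes (otherwise spokes 1 and m - 1 would each precede the
  other); reversing the order if necessary, it is rim m - 1. Then the spokes appear in cyclic order,
  every other rim edge lies above or below both of its spokes, and going once around the rim at
  most one step descends. So the rim is an increasing path closed by an edge, and the clique
  property forces a chord of the rim cycle, which has length m \<ge> 4.
\<close>

section \<open>Alternation via prefix counts\<close>

lemma alt_word_Suc: "alt_word x y (Suc k) = alt_word x y k @ [if even k then x else y]"
  by (simp add: alt_word_def)

lemma length_alt_word [simp]: "length (alt_word x y k) = k"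
  by (simp add: alt_word_def)

lemma count_list_alt_word:
  assumes "x \<noteq> y"
  shows "count_list (alt_word x y k) x = (k + 1) div 2" "count_list (alt_word x y k) y = k div 2"
  using assms by (induction k) (auto simp: alt_word_Suc alt_word_def)

lemma count_list_filter: "P x \<Longrightarrow> count_list (filter P xs) x = count_list xs x"
  by (induction xs) auto

lemma all_take_snoc_iff:
  "(\<forall>j. P (take j (xs @ [z]))) \<longleftrightarrow> (\<forall>j. P (take j xs)) \<and> P (xs @ [z])"
proof -
  have "take j (xs @ [z]) = (if j \<le> length xs then take j xs else xs @ [z])" for j
    by simp
  then show ?thesis
    by (metis le_refl nat_le_linear take_all_iff take_append)
qed

definition leads :: "'a list \<Rightarrow> 'a \<Rightarrow> 'a \<Rightarrow> bool" where
  "leads W x y \<longleftrightarrow> (\<forall>j. count_list (take j W) y \<le> count_list (take j W) x \<and>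
                          count_list (take j W) x \<le> count_list (take j W) y + 1)"

lemma leads_snoc:
  "leads (W @ [z]) x y \<longleftrightarrow> leads W x y \<and>
     count_list (W @ [z]) y \<le> count_list (W @ [z]) x \<and> count_list (W @ [z]) x \<le> count_list (W @ [z]) y + 1"
  unfolding leads_def by (rule all_take_snoc_iff)

lemma leads_count_list:
  "leads W x y \<Longrightarrow> count_list W y \<le> count_list W x \<and> count_list W x \<le> count_list W y + 1"
  unfolding leads_def by (metis take_all order_refl)

lemma filter_eq_alt_word_iff_leads:
  assumes "x \<noteq> y"
  defines "P \<equiv> \<lambda>z. z = x \<or> z = y"
  shows "filter P W = alt_word x y (length (filter P W)) \<longleftrightarrow> leads W x y"
proof (induction W rule: rev_induct)
  case Nil
  then show ?case by (simp add: leads_def alt_word_def)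
next
  case (snoc z W)
  let ?n = "length (filter P W)"
  have counts: "count_list W x = (?n + 1) div 2 \<and> count_list W y = ?n div 2"
    if "filter P W = alt_word x y ?n"
    using that count_list_alt_word[OF assms(1), of ?n] count_list_filter[of P]
    by (metis P_def)
  consider "z = x \<or> z = y" | "\<not> P z"
    unfolding P_def by blast
  then show ?case
  proof cases
    case 1
    then show ?thesis
      using snoc counts assms(1) leads_snoc[of W z x y] by (auto simp: alt_word_Suc P_def)
  next
    case 2
    then show ?thesis
      using snoc leads_snoc[of W z x y] leads_count_list[of W x y] by (auto simp: P_def)
  qed
qed

lemma alternate_iff_leads:
  assumes "x \<noteq> y"
  shows "alternate W x y \<longleftrightarrow> x \<in> set W \<and> y \<in> set W \<and> (leads W x y \<or> leads W y x)"
proof -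
  have "(\<lambda>z. z = y \<or> z = x) = (\<lambda>z. z = x \<or> z = y)" by auto
  then show ?thesis
    unfolding alternate_def
    using filter_eq_alt_word_iff_leads[OF assms, of W] filter_eq_alt_word_iff_leads[OF assms[symmetric], of W]
    by (metis length_alt_word)
qed

lemma alternate_commute: "alternate W x y \<longleftrightarrow> alternate W y x"
proof -
  have "(\<lambda>z. z = y \<or> z = x) = (\<lambda>z. z = x \<or> z = y)" by auto
  then show ?thesis
    unfolding alternate_def by auto
qed

definition first_occ :: "'a list \<Rightarrow> 'a \<Rightarrow> nat" where
  "first_occ W x = length (takeWhile (\<lambda>z. z \<noteq> x) W)"

lemma first_occ_nth: "x \<in> set W \<Longrightarrow> first_occ W x < length W \<and> W ! first_occ W x = x"
  unfolding first_occ_def by (induction W) auto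

lemma inj_on_first_occ: "inj_on (first_occ W) (set W)"
  by (rule inj_onI) (metis first_occ_nth)

lemma notin_take_first_occ: "x \<notin> set (take (first_occ W x) W)"
  unfolding first_occ_def by (metis (mono_tags, lifting) set_takeWhileD takeWhile_eq_take)

lemma in_take_Suc_first_occ: "x \<in> set W \<Longrightarrow> x \<in> set (take (Suc (first_occ W x)) W)"
  using first_occ_nth[of x W] by (metis in_set_conv_nth length_take lessI min_less_iff_conj nth_take)

lemma leads_if_first_occ_less:
  assumes "alternate W x y" "first_occ W x < first_occ W y"
  shows "leads W x y"
proof -
  let ?p = "take (Suc (first_occ W x)) W"
  have "x \<in> set W"
    using assms(1) by (simp add: alternate_def)
  then have "x \<in> set ?p"
    by (rule in_take_Suc_first_occ)
  moreover have "y \<notin> set ?p"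
    using notin_take_first_occ[of y W] set_take_subset_set_take[of "Suc (first_occ W x)" "first_occ W y" W] assms(2)
    by auto
  ultimately have "count_list ?p y < count_list ?p x"
    by (metis count_list_0_iff gr0I)
  then have "\<not> leads W y x"
    unfolding leads_def by (meson not_le)
  moreover have "x \<noteq> y"
    using assms(2) by auto
  ultimately show ?thesis
    using assms(1) by (simp add: alternate_iff_leads)
qed

text \<open>Along the chain, the number of occurrences of q k in a prefix decreases with k, and the closing
  edge bounds the total drop by one.\<close>

lemma alternate_chain:
  assumes step: "\<And>k. k < K \<Longrightarrow> first_occ W (q k) < first_occ W (q (Suc k)) \<and> alternate W (q k) (q (Suc k))"
    and close: "alternate W (q 0) (q K)" and "i < j" "j \<le> K"
  shows "q i \<noteq> q j \<and> alternate W (q i) (q j)"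
proof -
  define g where "g n = first_occ W (q (min n K))" for n
  have "g n \<le> g (Suc n)" for n
    using step[of n] by (cases "n < K") (auto simp: g_def min_def)
  then have g_mono: "a \<le> b \<Longrightarrow> g a \<le> g b" for a b
    by (rule lift_Suc_mono_le)
  have g_less: "g a < g b" if "a < b" "b \<le> K" for a b
    using step[of a] g_mono[of "Suc a" b] that by (auto simp: g_def min_def)
  have leads_step: "leads W (q k) (q (Suc k))" if "k < K" for k
    using step[OF that] by (auto intro: leads_if_first_occ_less)
  have "leads W (q 0) (q K)"
    using close g_less[of 0 K] assms(3,4) by (auto simp: g_def intro: leads_if_first_occ_less)
  have "leads W (q i) (q j)"
    unfolding leads_def
  proof
    fix p
    define c where "c k = count_list (take p W) (q (min k K))" for k
    have "c (Suc k) \<le> c k" for k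
      using leads_step[of k] unfolding leads_def c_def by (cases "k < K") (auto simp: min_def)
    then have c_anti: "c b \<le> c a" if "a \<le> b" for a b
      using that by (rule lift_Suc_antimono_le)
    have "c 0 \<le> c K + 1"
      using \<open>leads W (q 0) (q K)\<close> unfolding leads_def c_def by simp
    then have "c j \<le> c i \<and> c i \<le> c j + 1"
      using c_anti[of i j] c_anti[of 0 i] c_anti[of j K] assms(3,4) by linarith
    then show "count_list (take p W) (q j) \<le> count_list (take p W) (q i) \<and>
        count_list (take p W) (q i) \<le> count_list (take p W) (q j) + 1"
      using assms(3,4) by (simp add: c_def)
  qed
  moreover have "q k \<in> set W" if "k \<le> K" for k
    using that step[of k] close unfolding alternate_def by (cases "k < K") auto
  moreover have "q i \<noteq> q j"
    using g_less[OF assms(3,4)] assms(3,4) by (auto simp: g_def)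
  ultimately show ?thesis
    using assms(3,4) by (simp add: alternate_iff_leads)
qed

section \<open>Orders in which increasing closed paths span cliques\<close>

locale cycle_clique_order =
  fixes adj :: "'v \<Rightarrow> 'v \<Rightarrow> bool" and f :: "'v \<Rightarrow> 'a::linorder"
  assumes adj_sym: "\<And>x y. adj x y \<Longrightarrow> adj y x"
    and increasing_cycle_clique:
      "\<And>q K i j. (\<And>k. k < K \<Longrightarrow> f (q k) < f (q (Suc k)) \<and> adj (q k) (q (Suc k))) \<Longrightarrow>
         adj (q 0) (q K) \<Longrightarrow> i < j \<Longrightarrow> j \<le> K \<Longrightarrow> adj (q i) (q j)"
begin

lemma decreasing_cycle_clique:
  assumes step: "\<And>k. k < K \<Longrightarrow> f (q (Suc k)) < f (q k) \<and> adj (q k) (q (Suc k))"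
    and close: "adj (q 0) (q K)" and "i < j" "j \<le> K"
  shows "adj (q i) (q j)"
proof -
  define p where "p k = q (K - k)" for k
  have "f (p k) < f (p (Suc k)) \<and> adj (p k) (p (Suc k))" if "k < K" for k
  proof -
    have "Suc (K - Suc k) = K - k"
      using that by simp
    then show ?thesis
      using step[of "K - Suc k"] adj_sym[of "q (K - Suc k)" "q (K - k)"] that by (simp add: p_def)
  qed
  moreover have "adj (p 0) (p K)"
    using adj_sym[OF close] by (simp add: p_def)
  ultimately have "adj (p (K - j)) (p (K - i))"
    by (rule increasing_cycle_clique) (use assms(3,4) in auto)
  then show ?thesis
    using adj_sym[of "q j" "q i"] assms(3,4) by (simp add: p_def)
qed

lemma four_cycle_chords:
  assumes "f a < f b" "f b < f c" "f c < f d" "adj a b" "adj b c" "adj c d" "adj a d"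
  shows "adj a c" "adj b d"
proof -
  define q where "q k = [a, b, c, d] ! k" for k
  have "f (q k) < f (q (Suc k)) \<and> adj (q k) (q (Suc k))" if "k < 3" for k
    using that assms by (auto simp: q_def less_Suc_eq numeral_3_eq_3)
  moreover have "adj (q 0) (q 3)"
    using assms by (simp add: q_def numeral_3_eq_3)
  ultimately have "adj (q 0) (q 2)" "adj (q 1) (q 3)"
    by (rule increasing_cycle_clique; simp)+
  then show "adj a c" "adj b d"
    by (simp_all add: q_def numeral_2_eq_2 numeral_3_eq_3)
qed

definition between :: "'v \<Rightarrow> 'v \<Rightarrow> 'v \<Rightarrow> bool" where
  "between a b c \<longleftrightarrow> f a < f b \<and> f b < f c \<or> f c < f b \<and> f b < f a"

lemma between_commute: "between a b c \<longleftrightarrow> between c b a"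
  by (auto simp: between_def)

lemma between_iff_between:
  assumes "adj s r" "adj r t" "adj s x" "adj t x" "\<not> adj r x"
    and "f s < f t" "f r \<noteq> f s" "f r \<noteq> f t" "f x \<noteq> f s" "f x \<noteq> f t"
  shows "between s x t \<longleftrightarrow> between s r t"
proof -
  have adj': "adj x s" "adj x t" "adj r s" "adj t r" "\<not> adj x r"
    using assms(1-5) adj_sym by blast+
  have "\<not> (f x < f s \<and> f s < f r \<and> f r < f t)"
    using four_cycle_chords(1)[of x s r t] assms(1,2) adj' by blast
  moreover have "\<not> (f s < f r \<and> f r < f t \<and> f t < f x)"
    using four_cycle_chords(2)[of s r t x] assms(1-5) by blast
  moreover have "\<not> (f r < f s \<and> f s < f x \<and> f x < f t)"
    using four_cycle_chords(1)[of r s x t] assms(1-5) adj' by blast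
  moreover have "\<not> (f s < f x \<and> f x < f t \<and> f t < f r)"
    using four_cycle_chords(2)[of s x t r] assms(1-5) adj' by blast
  ultimately show ?thesis
    using assms(6-) unfolding between_def by (auto simp: neq_iff dest: order.strict_trans)
qed

end

lemma cycle_clique_order_first_occ:
  "cycle_clique_order (\<lambda>x y. x \<noteq> y \<and> alternate W x y) (\<lambda>x. int (first_occ W x))"
proof unfold_locales
  fix q :: "nat \<Rightarrow> 'a" and K i j :: nat
  assume "\<And>k. k < K \<Longrightarrow> int (first_occ W (q k)) < int (first_occ W (q (Suc k))) \<and>
            q k \<noteq> q (Suc k) \<and> alternate W (q k) (q (Suc k))"
    and "q 0 \<noteq> q K \<and> alternate W (q 0) (q K)" "i < j" "j \<le> K"
  then show "q i \<noteq> q j \<and> alternate W (q i) (q j)"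
    using alternate_chain[of K W q i j] by simp
qed (auto simp: alternate_commute)

section \<open>The line graph of a wheel\<close>

lemma Suc_mod_neq_self:
  fixes k m :: nat
  assumes "1 < m"
  shows "Suc k mod m \<noteq> k"
proof
  assume eq: "Suc k mod m = k"
  then have "k < m"
    using mod_less_divisor[of m "Suc k"] assms by simp
  then show False
    using eq assms by (cases "Suc k = m") auto
qed

lemma add_mod_neq_self:
  fixes k d m :: nat
  assumes "0 < d" "d < m"
  shows "(k + d) mod m \<noteq> k mod m"
proof
  assume "(k + d) mod m = k mod m"
  then have "m dvd d"
    using mod_eq_dvd_iff_nat[of k "k + d" m] by simp
  then show False
    using assms by (simp add: nat_dvd_not_less)
qed

lemma Suc_Suc_mod_neq_self:
  fixes k m :: nat
  assumes "2 < m"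
  shows "Suc (Suc k) mod m \<noteq> k"
proof (cases "k < m")
  case True
  then show ?thesis
    using add_mod_neq_self[of 2 m k] assms by simp
next
  case False
  have "Suc (Suc k) mod m < m"
    using assms by simp
  then show ?thesis
    using False by linarith
qed

lemma add_mod_eq_add_mod_iff:
  fixes i j c m :: nat
  assumes "i < m" "j < m"
  shows "(i + c) mod m = (j + c) mod m \<longleftrightarrow> i = j"
proof
  have neq: "(a + c) mod m \<noteq> (b + c) mod m" if "a < b" "b < m" for a b
  proof -
    have "(a + c + (b - a)) mod m \<noteq> (a + c) mod m"
      by (rule add_mod_neq_self) (use that in auto)
    moreover have "a + c + (b - a) = b + c"
      using that by simp
    ultimately show ?thesis by metis
  qed
  assume "(i + c) mod m = (j + c) mod m"
  then show "i = j"
    using neq[of i j] neq[of j i] assms by (metis linorder_neqE_nat)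
qed simp

text \<open>The line graph of the wheel W_m with hub m: spoke i stands for the edge {i, m}, rim i for
  {i, (i + 1) mod m}; f is the order of first occurrences.\<close>

locale wheel_line_order = cycle_clique_order adj f
  for adj :: "'v \<Rightarrow> 'v \<Rightarrow> bool" and f :: "'v \<Rightarrow> int" +
  fixes m :: nat and spoke rim :: "nat \<Rightarrow> 'v"
  assumes four_le_m: "4 \<le> m"
    and f_spoke_inj: "\<And>i j. i < m \<Longrightarrow> j < m \<Longrightarrow> f (spoke i) = f (spoke j) \<Longrightarrow> i = j"
    and f_rim_inj: "\<And>i j. i < m \<Longrightarrow> j < m \<Longrightarrow> f (rim i) = f (rim j) \<Longrightarrow> i = j"
    and f_spoke_neq_rim: "\<And>i j. i < m \<Longrightarrow> j < m \<Longrightarrow> f (spoke i) \<noteq> f (rim j)"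
    and adj_spoke_spoke: "\<And>i j. i < m \<Longrightarrow> j < m \<Longrightarrow> i \<noteq> j \<Longrightarrow> adj (spoke i) (spoke j)"
    and adj_rim_spoke: "\<And>i j. i < m \<Longrightarrow> j < m \<Longrightarrow> adj (rim i) (spoke j) \<longleftrightarrow> j = i \<or> j = Suc i mod m"
    and adj_rim_rim:
      "\<And>i j. i < m \<Longrightarrow> j < m \<Longrightarrow> adj (rim i) (rim j) \<longleftrightarrow> j = Suc i mod m \<or> i = Suc j mod m"
begin

lemma rotate: "wheel_line_order adj f m (\<lambda>k. spoke ((k + c) mod m)) (\<lambda>k. rim ((k + c) mod m))"
proof -
  have m: "0 < m"
    using four_le_m by simp
  have shift: "(Suc i mod m + c) mod m = Suc ((i + c) mod m) mod m" for i
    by (simp add: mod_Suc_eq mod_add_left_eq)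
  show ?thesis
  proof (rule wheel_line_order.intro[OF cycle_clique_order_axioms], unfold_locales)
    fix i j
    assume ij: "i < m" "j < m"
    then have eq_iff: "(i + c) mod m = (j + c) mod m \<longleftrightarrow> i = j" "(j + c) mod m = (i + c) mod m \<longleftrightarrow> j = i"
      using add_mod_eq_add_mod_iff by blast+
    have Suc_eq_iff: "(j + c) mod m = Suc ((i + c) mod m) mod m \<longleftrightarrow> j = Suc i mod m"
                     "(i + c) mod m = Suc ((j + c) mod m) mod m \<longleftrightarrow> i = Suc j mod m"
      using add_mod_eq_add_mod_iff[of j m "Suc i mod m" c] add_mod_eq_add_mod_iff[of i m "Suc j mod m" c]
        ij m by (simp_all add: shift)
    show "f (spoke ((i + c) mod m)) = f (spoke ((j + c) mod m)) \<Longrightarrow> i = j"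
      using f_spoke_inj eq_iff m by simp
    show "f (rim ((i + c) mod m)) = f (rim ((j + c) mod m)) \<Longrightarrow> i = j"
      using f_rim_inj eq_iff m by simp
    show "f (spoke ((i + c) mod m)) \<noteq> f (rim ((j + c) mod m))"
      using f_spoke_neq_rim m by simp
    show "i \<noteq> j \<Longrightarrow> adj (spoke ((i + c) mod m)) (spoke ((j + c) mod m))"
      using adj_spoke_spoke eq_iff m by simp
    show "adj (rim ((i + c) mod m)) (spoke ((j + c) mod m)) \<longleftrightarrow> j = i \<or> j = Suc i mod m"
      using adj_rim_spoke[of "(i + c) mod m" "(j + c) mod m"] eq_iff Suc_eq_iff m by simp
    show "adj (rim ((i + c) mod m)) (rim ((j + c) mod m)) \<longleftrightarrow> j = Suc i mod m \<or> i = Suc j mod m"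
      using adj_rim_rim[of "(i + c) mod m" "(j + c) mod m"] Suc_eq_iff m by simp
  qed (rule four_le_m)
qed

lemma reverse_order: "wheel_line_order adj (\<lambda>x. - f x) m spoke rim"
proof unfold_locales
  fix q :: "nat \<Rightarrow> 'v" and K i j :: nat
  assume "\<And>k. k < K \<Longrightarrow> - f (q k) < - f (q (Suc k)) \<and> adj (q k) (q (Suc k))"
    and "adj (q 0) (q K)" "i < j" "j \<le> K"
  then show "adj (q i) (q j)"
    using decreasing_cycle_clique[of K q i j] by simp
next
  fix i j
  assume "i < m" "j < m"
  then show "- f (spoke i) = - f (spoke j) \<Longrightarrow> i = j" "- f (rim i) = - f (rim j) \<Longrightarrow> i = j"
      "- f (spoke i) \<noteq> - f (rim j)"
    using f_spoke_inj f_rim_inj f_spoke_neq_rim by auto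
qed (simp_all add: adj_sym four_le_m adj_spoke_spoke adj_rim_spoke adj_rim_rim)

lemma adj_spoke_rim: "i < m \<Longrightarrow> j < m \<Longrightarrow> adj (spoke j) (rim i) \<longleftrightarrow> j = i \<or> j = Suc i mod m"
  using adj_rim_spoke adj_sym by metis

lemma spoke_between_iff_rim_between:
  assumes "i < m" "c < m" "c \<noteq> i" "c \<noteq> Suc i mod m"
  shows "between (spoke i) (spoke c) (spoke (Suc i mod m)) \<longleftrightarrow>
         between (spoke i) (rim i) (spoke (Suc i mod m))"
proof -
  define j where "j = Suc i mod m"
  have j: "j < m" "j \<noteq> i"
    using four_le_m Suc_mod_neq_self[of m i] by (auto simp: j_def)
  have adj: "adj (spoke i) (rim i)" "adj (rim i) (spoke j)" "adj (spoke j) (rim i)" "adj (rim i) (spoke i)"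
    "adj (spoke i) (spoke c)" "adj (spoke j) (spoke c)" "\<not> adj (rim i) (spoke c)"
    using assms j by (simp_all add: adj_rim_spoke adj_spoke_rim adj_spoke_spoke j_def)
  have neq: "f (spoke i) \<noteq> f (spoke j)" "f (rim i) \<noteq> f (spoke i)" "f (rim i) \<noteq> f (spoke j)"
    "f (spoke c) \<noteq> f (spoke i)" "f (spoke c) \<noteq> f (spoke j)"
    using f_spoke_inj[of i j] f_spoke_inj[of c i] f_spoke_inj[of c j]
      f_spoke_neq_rim[of i i] f_spoke_neq_rim[of j i] assms j
    by (auto simp: j_def)
  show ?thesis
  proof (cases "f (spoke i) < f (spoke j)")
    case True
    show ?thesis
      using between_iff_between[OF adj(1,2,5,6,7) True neq(2-)] by (simp add: j_def)
  next
    case False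
    then have "f (spoke j) < f (spoke i)"
      using neq(1) by linarith
    then show ?thesis
      using between_iff_between[OF adj(3,4,6,5,7) _ neq(3,2,5,4)] between_commute by (simp add: j_def)
  qed
qed

context
  assumes rim_last_inside: "f (spoke 0) < f (rim (m - 1))" "f (rim (m - 1)) < f (spoke (m - 1))"
begin

lemma spokes_inside:
  assumes "0 < j" "j < m - 1"
  shows "f (spoke 0) < f (spoke j) \<and> f (spoke j) < f (spoke (m - 1))"
proof -
  have "Suc (m - 1) mod m = 0"
    using four_le_m by simp
  then have "between (spoke (m - 1)) (spoke j) (spoke 0)"
    using spoke_between_iff_rim_between[of "m - 1" j] rim_last_inside assms
    by (simp add: between_def)
  then show ?thesis
    using rim_last_inside unfolding between_def by linarith
qed

lemma spokes_increasing: "i < j \<Longrightarrow> j < m \<Longrightarrow> f (spoke i) < f (spoke j)"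
proof (induction i arbitrary: j)
  case 0
  show ?case
  proof (cases "j < m - 1")
    case False
    then have "j = m - 1"
      using "0.prems" by simp
    then show ?thesis
      using rim_last_inside by simp
  qed (use spokes_inside[of j] "0.prems" in simp)
next
  case (Suc i)
  have i: "Suc i < m - 1" "Suc i mod m = Suc i"
    using Suc.prems by auto
  have below: "f (spoke i) < f (spoke j)" "f (spoke i) < f (spoke (Suc i))" "f (spoke i) < f (spoke (m - 1))"
    using Suc.IH Suc.prems i by auto
  have "f (spoke (Suc i)) < f (spoke (m - 1))"
    using spokes_inside[of "Suc i"] i by simp
  then have "\<not> between (spoke i) (spoke (m - 1)) (spoke (Suc i))"
    using below unfolding between_def by linarith
  then have "\<not> between (spoke i) (rim i) (spoke (Suc i))"
    using spoke_between_iff_rim_between[of i "m - 1"] i by simp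
  then have "\<not> between (spoke i) (spoke j) (spoke (Suc i))"
    using spoke_between_iff_rim_between[of i j] i Suc.prems by simp
  moreover have "f (spoke j) \<noteq> f (spoke (Suc i))"
    using f_spoke_inj[of j "Suc i"] Suc.prems by auto
  ultimately show ?case
    using below unfolding between_def by linarith
qed

lemma rim_outside:
  assumes "Suc i < m"
  shows "f (spoke (Suc i)) < f (rim i) \<or> f (rim i) < f (spoke i)"
proof -
  define c :: nat where "c = (if i = 0 then 2 else 0)"
  have c: "c < m" "c \<noteq> i" "c \<noteq> Suc i"
    using four_le_m by (auto simp: c_def)
  have "\<not> between (spoke i) (spoke c) (spoke (Suc i))"
    using spokes_increasing[of c i] spokes_increasing[of "Suc i" c] spokes_increasing[of i "Suc i"] c assms
    unfolding between_def by (cases "c < i") auto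
  then have "\<not> between (spoke i) (rim i) (spoke (Suc i))"
    using spoke_between_iff_rim_between[of i c] c assms by simp
  moreover have "f (rim i) \<noteq> f (spoke i)" "f (rim i) \<noteq> f (spoke (Suc i))"
    using f_spoke_neq_rim assms by (metis Suc_lessD)+
  ultimately show ?thesis
    using spokes_increasing[of i "Suc i"] assms unfolding between_def by linarith
qed

lemma rim_below_Suc:
  assumes "Suc (Suc i) < m" "f (rim i) < f (spoke i)"
  shows "f (rim (Suc i)) < f (spoke (Suc i))"
proof (rule ccontr)
  assume "\<not> ?thesis"
  then have "f (spoke (Suc (Suc i))) < f (rim (Suc i))"
    using rim_outside[of "Suc i"] assms(1) by auto
  moreover have "f (rim i) < f (spoke (Suc i))" "f (spoke (Suc i)) < f (spoke (Suc (Suc i)))"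
    using assms spokes_increasing[of i "Suc i"] spokes_increasing[of "Suc i" "Suc (Suc i)"] by auto
  ultimately have "adj (rim i) (spoke (Suc (Suc i)))"
    using four_cycle_chords(1)[of "rim i" "spoke (Suc i)" "spoke (Suc (Suc i))" "rim (Suc i)"] assms(1)
    by (simp add: adj_rim_spoke adj_spoke_rim adj_rim_rim adj_spoke_spoke)
  then show False
    using assms(1) by (simp add: adj_rim_spoke)
qed

lemma rim_below_mono:
  assumes "i \<le> k" "Suc k < m" "f (rim i) < f (spoke i)"
  shows "f (rim k) < f (spoke k)"
  using assms
proof (induction k rule: dec_induct)
  case (step k)
  then show ?case
    using rim_below_Suc[of k] by simp
qed simp

lemma rim_descent_above:
  assumes "Suc k < m" "f (rim (Suc k)) < f (rim k)"
  shows "f (spoke (Suc k)) < f (rim k)"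
proof (rule ccontr)
  assume "\<not> ?thesis"
  then have "f (rim k) < f (spoke k)"
    using rim_outside[of k] assms(1) by auto
  moreover have "f (spoke k) < f (spoke (Suc k))"
    using spokes_increasing[of k "Suc k"] assms(1) by simp
  ultimately have "adj (rim (Suc k)) (spoke k)"
    using four_cycle_chords(1)[of "rim (Suc k)" "rim k" "spoke k" "spoke (Suc k)"] assms
    by (simp add: adj_rim_spoke adj_spoke_rim adj_rim_rim adj_spoke_spoke)
  moreover have "Suc (Suc k) mod m \<noteq> k"
    using four_le_m by (simp add: Suc_Suc_mod_neq_self)
  ultimately show False
    using assms(1) by (simp add: adj_rim_spoke)
qed

lemma rim_descent_below_next:
  assumes "Suc (Suc k) < m" "f (rim (Suc k)) < f (rim k)"
  shows "f (rim (Suc k)) < f (spoke (Suc k))"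
proof (rule ccontr)
  assume "\<not> ?thesis"
  then have "f (spoke (Suc (Suc k))) < f (rim (Suc k))"
    using rim_outside[of "Suc k"] assms(1) by auto
  moreover have "f (spoke (Suc k)) < f (spoke (Suc (Suc k)))"
    using spokes_increasing[of "Suc k" "Suc (Suc k)"] assms(1) by simp
  ultimately have "adj (spoke (Suc (Suc k))) (rim k)"
    using four_cycle_chords(2)[of "spoke (Suc k)" "spoke (Suc (Suc k))" "rim (Suc k)" "rim k"] assms
    by (simp add: adj_rim_spoke adj_spoke_rim adj_rim_rim adj_spoke_spoke)
  then show False
    using assms(1) by (simp add: adj_spoke_rim)
qed

lemma rim_descent_last:
  assumes "f (rim 0) < f (rim (m - 1))"
  shows "f (rim 0) < f (spoke 0)"
proof (rule ccontr)
  have m: "Suc 0 < m" "m - 1 < m" "Suc (m - 1) mod m = 0" "m - 1 \<noteq> Suc 0"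
    using four_le_m by auto
  assume "\<not> ?thesis"
  then have "f (spoke 1) < f (rim 0)"
    using rim_outside[of 0] m by auto
  moreover have "f (spoke 0) < f (spoke 1)"
    using spokes_increasing[of 0 1] m by simp
  ultimately have "adj (spoke 1) (rim (m - 1))"
    using four_cycle_chords(2)[of "spoke 0" "spoke 1" "rim 0" "rim (m - 1)"] assms m
    by (simp add: adj_rim_spoke adj_spoke_rim adj_rim_rim adj_spoke_spoke)
  then show False
    using m by (simp add: adj_spoke_rim)
qed

lemma rim_descent_unique:
  assumes "k < k'" "k' < m"
    and "f (rim (Suc k mod m)) < f (rim k)" "f (rim (Suc k' mod m)) < f (rim k')"
  shows False
proof (cases "Suc k' < m")
  case True
  then have "f (rim (Suc k)) < f (spoke (Suc k))"
    using rim_descent_below_next[of k] assms by simp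
  then have "f (rim k') < f (spoke k')"
    using rim_below_mono[of "Suc k" k'] assms(1) True by simp
  moreover have "f (spoke (Suc k')) < f (rim k')"
    using rim_descent_above[of k'] assms(4) True by simp
  ultimately show False
    using spokes_increasing[of k' "Suc k'"] True by simp
next
  case False
  then have "k' = m - 1" "Suc k mod m = Suc k"
    using assms(1,2) by auto
  then have "f (rim 0) < f (spoke 0)"
    using rim_descent_last assms(4) four_le_m by simp
  then have "f (rim k) < f (spoke k)"
    using rim_below_mono[of 0 k] assms(1,2) by simp
  moreover have "f (spoke (Suc k)) < f (rim k)"
    using rim_descent_above[of k] assms(1-3) \<open>Suc k mod m = Suc k\<close> by simp
  ultimately show False
    using spokes_increasing[of k "Suc k"] assms(1,2) by simp
qed

lemma rims_ascend_but_one: "\<exists>b<m. \<forall>k<m. k \<noteq> b \<longrightarrow> f (rim k) < f (rim (Suc k mod m))"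
proof (cases "\<exists>b<m. \<not> f (rim b) < f (rim (Suc b mod m))")
  case True
  then obtain b where b: "b < m" "\<not> f (rim b) < f (rim (Suc b mod m))"
    by blast
  have descent: "f (rim (Suc k mod m)) < f (rim k)" if "k < m" "\<not> f (rim k) < f (rim (Suc k mod m))" for k
    using that f_rim_inj[of k "Suc k mod m"] Suc_mod_neq_self[of m k] four_le_m by fastforce
  have "f (rim k) < f (rim (Suc k mod m))" if "k < m" "k \<noteq> b" for k
    using rim_descent_unique[of k b] rim_descent_unique[of b k] descent b that
    by (metis linorder_neqE_nat)
  then show ?thesis
    using b(1) by blast
next
  case False
  then show ?thesis
    using four_le_m by (intro exI[of _ 0]) auto
qed

end

text \<open>Starting after the descent, the rim is an increasing path closed by an edge, so two rim
  edges at distance two would be adjacent.\<close>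

lemma no_single_rim_descent:
  assumes "b < m" "\<And>k. k < m \<Longrightarrow> k \<noteq> b \<Longrightarrow> f (rim k) < f (rim (Suc k mod m))"
  shows False
proof -
  define q where "q j = rim ((j + Suc b) mod m)" for j
  have "f (q k) < f (q (Suc k)) \<and> adj (q k) (q (Suc k))" if "k < m - 1" for k
  proof -
    define c where "c = (k + Suc b) mod m"
    have "(b + Suc k) mod m \<noteq> b mod m"
      by (rule add_mod_neq_self) (use that in auto)
    then have c: "c < m" "c \<noteq> b" "q k = rim c" "q (Suc k) = rim (Suc c mod m)"
      using assms(1) four_le_m by (auto simp: c_def q_def mod_Suc_eq add.commute)
    then show ?thesis
      using assms(2)[of c] adj_rim_rim[of c "Suc c mod m"] by simp
  qed
  moreover have "adj (q 0) (q (m - 1))"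
  proof -
    have "q 0 = rim (Suc b mod m)" "q (m - 1) = rim b"
      using assms(1) four_le_m by (simp_all add: q_def)
    then show ?thesis
      using adj_rim_rim[of "Suc b mod m" b] assms(1) by simp
  qed
  ultimately have "adj (q 0) (q 2)"
    by (rule increasing_cycle_clique) (use four_le_m in auto)
  moreover have "Suc (Suc (Suc b)) mod m \<noteq> Suc (Suc b) mod m"
    "Suc b mod m \<noteq> Suc (Suc (Suc (Suc b))) mod m"
    using add_mod_neq_self[of 1 m "Suc (Suc b)"] add_mod_neq_self[of 3 m "Suc b"] four_le_m
    by (simp_all add: numeral_3_eq_3)
  ultimately show False
    unfolding q_def using adj_rim_rim[of "Suc b mod m" "(2 + Suc b) mod m"] four_le_m
    by (simp add: mod_Suc_eq add.commute)
qed

lemma rim_last_not_inside: "\<not> (f (spoke 0) < f (rim (m - 1)) \<and> f (rim (m - 1)) < f (spoke (m - 1)))"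
  using rims_ascend_but_one no_single_rim_descent by blast

lemma spoke_0_not_min: "\<exists>i<m. f (spoke i) < f (spoke 0)"
proof (rule ccontr)
  assume "\<not> ?thesis"
  then have min: "f (spoke 0) \<le> f (spoke i)" if "i < m" for i
    using that by force
  have m: "Suc 0 < m" "m - 1 < m" "m - 1 \<noteq> 0" "m - 1 \<noteq> Suc 0" "Suc (m - 1) mod m = 0"
    using four_le_m by auto
  have lt: "f (spoke 0) < f (spoke 1)" "f (spoke 0) < f (spoke (m - 1))"
    using min[of 1] min[of "m - 1"] f_spoke_inj[of 0 1] f_spoke_inj[of 0 "m - 1"] m by force+
  \<comment> \<open>rim 0 between spokes 0 and 1 is the mirror image of the excluded configuration\<close>
  interpret mirror: wheel_line_order adj "\<lambda>x. - f x" m "\<lambda>k. spoke ((k + 1) mod m)" "\<lambda>k. rim ((k + 1) mod m)"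
    by (rule wheel_line_order.rotate[OF reverse_order])
  have "\<not> between (spoke (m - 1)) (rim (m - 1)) (spoke 0)"
    using rim_last_not_inside lt unfolding between_def by auto
  then have "\<not> between (spoke (m - 1)) (spoke 1) (spoke 0)"
    using spoke_between_iff_rim_between[of "m - 1" 1] m by simp
  moreover have "\<not> between (spoke 0) (rim 0) (spoke 1)"
    using mirror.rim_last_not_inside lt m unfolding between_def by auto
  then have "\<not> between (spoke 0) (spoke (m - 1)) (spoke 1)"
    using spoke_between_iff_rim_between[of 0 "m - 1"] m by simp
  moreover have "f (spoke 1) \<noteq> f (spoke (m - 1))"
    using f_spoke_inj[of 1 "m - 1"] m by auto
  ultimately show False
    using lt unfolding between_def by linarith
qed

lemma inconsistent: False
proof -
  let ?S = "(\<lambda>i. f (spoke i)) ` {..<m}"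
  have S: "finite ?S" "?S \<noteq> {}"
    using four_le_m by (auto simp: lessThan_empty_iff)
  obtain c where c: "c < m" "f (spoke c) = Min ?S"
    using Min_in[OF S] by auto
  have min: "f (spoke c) \<le> f (spoke i)" if "i < m" for i
    using Min_le[OF S(1)] c(2) that by simp
  interpret rotated: wheel_line_order adj f m "\<lambda>k. spoke ((k + c) mod m)" "\<lambda>k. rim ((k + c) mod m)"
    by (rule rotate)
  show False
    using rotated.spoke_0_not_min min c(1) by (auto simp: not_less[symmetric])
qed

end

lemma spoke_mem_wheel_edges: "i < m \<Longrightarrow> {i, m} \<in> wheel_edges m"
  unfolding wheel_edges_def by blast

lemma rim_mem_wheel_edges: "i < m \<Longrightarrow> {i, Suc i mod m} \<in> wheel_edges m"
  unfolding wheel_edges_def by auto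

lemma wheel_hub_notin_rim:
  assumes "i < m"
  shows "m \<notin> {i, Suc i mod m}"
proof -
  have "Suc i mod m < m"
    using assms by simp
  then show ?thesis
    using assms by (metis insertE less_irrefl singletonD)
qed

lemma wheel_rim_inter_spoke:
  assumes "i < m" "j < m"
  shows "{i, Suc i mod m} \<inter> {j, m} \<noteq> {} \<longleftrightarrow> j = i \<or> j = Suc i mod m"
  using wheel_hub_notin_rim[OF assms(1)] assms by auto

lemma wheel_rim_eq_iff:
  assumes "2 < m" "i < m" "j < m"
  shows "{i, Suc i mod m} = {j, Suc j mod m} \<longleftrightarrow> i = j"
proof
  assume eq: "{i, Suc i mod m} = {j, Suc j mod m}"
  show "i = j"
  proof (rule ccontr)
    assume "i \<noteq> j"
    then have "i = Suc j mod m" "j = Suc i mod m"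
      using eq by (auto simp: doubleton_eq_iff)
    then have "Suc (Suc i) mod m = i"
      by (metis mod_Suc_eq)
    then show False
      using Suc_Suc_mod_neq_self assms(1) by blast
  qed
qed simp

lemma wheel_rims_adjacent_iff:
  assumes "2 < m" "i < m" "j < m"
  shows "{i, Suc i mod m} \<noteq> {j, Suc j mod m} \<and> {i, Suc i mod m} \<inter> {j, Suc j mod m} \<noteq> {} \<longleftrightarrow>
         j = Suc i mod m \<or> i = Suc j mod m"
proof (cases "i = j")
  case False
  then have "Suc i mod m \<noteq> Suc j mod m"
    using add_mod_eq_add_mod_iff[of i m j 1] assms by simp
  then show ?thesis
    using wheel_rim_eq_iff[OF assms] False by auto
qed (use Suc_mod_neq_self[of m j] assms in auto)

lemma wheel_line_order_if_represents:
  assumes m: "4 \<le> m" and W: "set W = wheel_edges m"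
    and alt: "\<And>x y. x \<in> wheel_edges m \<Longrightarrow> y \<in> wheel_edges m \<Longrightarrow> x \<noteq> y \<Longrightarrow>
                alternate W x y \<longleftrightarrow> {x, y} \<in> line_edges (wheel_edges m)"
  shows "wheel_line_order (\<lambda>x y. x \<noteq> y \<and> alternate W x y) (\<lambda>x. int (first_occ W x)) m
           (\<lambda>i. {i, m}) (\<lambda>i. {i, Suc i mod m})"
proof -
  have adj: "x \<noteq> y \<and> alternate W x y \<longleftrightarrow> x \<noteq> y \<and> x \<inter> y \<noteq> {}"
    if "x \<in> wheel_edges m" "y \<in> wheel_edges m" for x y
    using alt[OF that] that unfolding line_edges_def by (auto simp: doubleton_eq_iff)
  have f_eq: "int (first_occ W x) = int (first_occ W y) \<longleftrightarrow> x = y"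
    if "x \<in> wheel_edges m" "y \<in> wheel_edges m" for x y
    using inj_on_first_occ[of W] that W by (auto dest: inj_onD)
  show ?thesis
  proof (rule wheel_line_order.intro[OF cycle_clique_order_first_occ], unfold_locales)
    fix i j
    assume ij: "i < m" "j < m"
    note mem = spoke_mem_wheel_edges[OF ij(1)] spoke_mem_wheel_edges[OF ij(2)]
      rim_mem_wheel_edges[OF ij(1)] rim_mem_wheel_edges[OF ij(2)]
    have spoke_neq_rim: "{i, m} \<noteq> {j, Suc j mod m}"
      using wheel_hub_notin_rim[OF ij(2)] by auto
    show "int (first_occ W {i, m}) = int (first_occ W {j, m}) \<Longrightarrow> i = j"
      using f_eq[OF mem(1,2)] by (auto simp: doubleton_eq_iff)
    show "int (first_occ W {i, Suc i mod m}) = int (first_occ W {j, Suc j mod m}) \<Longrightarrow> i = j"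
      using f_eq[OF mem(3,4)] wheel_rim_eq_iff[of m i j] m ij by simp
    show "int (first_occ W {i, m}) \<noteq> int (first_occ W {j, Suc j mod m})"
      using f_eq[OF mem(1,4)] spoke_neq_rim by simp
    show "i \<noteq> j \<Longrightarrow> {i, m} \<noteq> {j, m} \<and> alternate W {i, m} {j, m}"
      using adj[OF mem(1,2)] by (auto simp: doubleton_eq_iff)
    show "{i, Suc i mod m} \<noteq> {j, m} \<and> alternate W {i, Suc i mod m} {j, m} \<longleftrightarrow> j = i \<or> j = Suc i mod m"
      using adj[OF mem(3,2)] wheel_hub_notin_rim[OF ij(1)] wheel_rim_inter_spoke[OF ij] by auto
    show "{i, Suc i mod m} \<noteq> {j, Suc j mod m} \<and> alternate W {i, Suc i mod m} {j, Suc j mod m} \<longleftrightarrow>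
          j = Suc i mod m \<or> i = Suc j mod m"
      using adj[OF mem(3,4)] wheel_rims_adjacent_iff[of m i j] m ij by simp
  qed (rule m)
qed

theorem theorem2:
  fixes n :: nat
  assumes "n \<ge> 3"
  shows "\<not> representable (line_verts (wheel_edges (n + 1))) (line_edges (wheel_edges (n + 1)))"
proof
  let ?E = "wheel_edges (n + 1)"
  assume "representable (line_verts ?E) (line_edges ?E)"
  then obtain W where W: "set W = ?E"
    and alt: "\<forall>x\<in>?E. \<forall>y\<in>?E. x \<noteq> y \<longrightarrow> (alternate W x y \<longleftrightarrow> {x, y} \<in> line_edges ?E)"
    unfolding representable_def line_verts_def by blast
  interpret wheel_line_order "\<lambda>x y. x \<noteq> y \<and> alternate W x y" "\<lambda>x. int (first_occ W x)" "n + 1"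
    "\<lambda>i. {i, n + 1}" "\<lambda>i. {i, Suc i mod (n + 1)}"
    by (rule wheel_line_order_if_represents) (use assms W alt in auto)
  show False
    by (rule inconsistent)
qed

end
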